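(* Let $P$ be an online abstract network design problem and $\mathcal M$ a family of metrics. Suppose that there exists an online algorithm $\mathsf{Alg}^{\mathcal M}$ for $P$ over metrics belonging to $\mathcal M$ with competitive ratio $\beta$, and that there exists an online embedding algorithm $\mathsf{Embed}^{\mathcal M}$ that embeds into $\mathcal M$ with distortion $\alpha$, where the embeddings produced are fully extendable and $\mathsf{Embed}^{\mathcal M}$ and $\mathsf{Alg}^{\mathcal M}$ are compatible. Then there exists an online algorithm for $P$ over arbitrary metrics with competitive ratio $\alpha\beta$. Moreover, when either $\mathsf{Embed}^{\mathcal M}$ or $\mathsf{Alg}^{\mathcal M}$ is randomized, the resulting algorithm is randomized with expected competitive ratio $\alpha\beta$.
   Context: Abstract network design: instance = metric (complete graph with edge lengths) $(V,d_V)$ and online requests $Z_i\subseteq V$; with $\mathcal Z_i=\bigcup_{j\le i}Z_j$, the algorithm irrevocably outputs at step $i$ a response $(R_i,C_i)$, $R_i$ a set of edges, $C_i$ an ordered list of pairs from $\binom{\mathcal Z_i}{2}$; given feasibility functions $\mathcal F_i$, the solution is feasible iff $\mathcal F_i(C_1,\ldots,C_i)=1$ and each pair of $C_j$ is connected in $R_j$ for $j\le i$; feasibility must hold at every step. Load functions $\rho_i$ on subsets of $\{1,\ldots,i\}$ are subadditive, monotone, zero exactly on $\emptyset$, consistent; $\rho(I)=\rho_{\max I}(I)$; cost $=\sum_e d(e)\rho(\{j:e\in R_j\})$. $c$-competitive: (expected) cost $\le c\cdot\mathrm{OPT}$ on every instance. Online embedding $f=(f_1,\ldots,f_r)$ of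 the request sequence (terminals) into $(M,d_M)$: each $f_i$ non-contractive on the terminals so far and extending $f_{i-1}$, distortion bound $\alpha_i$. It is fully extendable with respect to $M_1\subseteq\cdots\subseteq M_r\subseteq M$ if for all $i$ there are $F_i:V\to M$, $H_i:M_i\to V$ with: (i) depending only on terminals so far; (ii) $F_i$ extends $f_i$, $d_M(F_i(u),F_i(v))\le\alpha_i d_V(u,v)$; (iii) $H_i$ extends $f_i^{-1}$ and is non-expansive on $M_i$; (iv) $H_{i+1}$ extends $H_i$ (for probabilistic embeddings, per embedding in the support, with (ii) in expectation). The instance induced by $f$ on $(M,d_M)$ has requests $f(Z_i)$, feasibility functions $\mathcal F'_i(C'_1,\ldots,C'_i)=\mathcal F_i(f^{-1}(C'_1),\ldots,f^{-1}(C'_i))$ and the same load function. $f$ and a solution $((R^M_1,C^M_1),\ldots)$ of the induced instance are compatible if $M_i$ contains the vertex set of $R^M_i$ for each $i$ (for every embedding/solution in the supports if randomized). $\mathsf{Embed}^{\mathcal M}$ and $\mathsf{Alg}^{\mathcal M}$ are compatible if for every instance, the embedding $f$ produced by $\mathsf{Embed}^{\mathcal M}$ into some $(M,d_M)\in\mathcal M$ and the solution of $\mathsf{Alg}^{\mathcal M}$ on the instance induced by $f$ are compatible. *)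

theory Defs
  imports "HOL-Probability.Probability"
begin

text \<open>A (finite) metric given as a vertex set with a distance function (complete graph
  with edge lengths).\<close>
definition fin_metric :: "'a set \<Rightarrow> ('a \<Rightarrow> 'a \<Rightarrow> real) \<Rightarrow> bool" where
  "fin_metric V d \<longleftrightarrow> finite V \<and>
     (\<forall>u\<in>V. \<forall>v\<in>V. 0 \<le> d u v \<and> (d u v = 0 \<longleftrightarrow> u = v) \<and> d u v = d v u) \<and>
     (\<forall>u\<in>V. \<forall>v\<in>V. \<forall>w\<in>V. d u w \<le> d u v + d v w)"

definition edges :: "'a set \<Rightarrow> 'a set set" where
  "edges S = {{u, v} | u v. u \<in> S \<and> v \<in> S \<and> u \<noteq> v}"

definition edge_len :: "('a \<Rightarrow> 'a \<Rightarrow> real) \<Rightarrow> 'a set \<Rightarrow> real" where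
  "edge_len d e = (THE l. \<exists>u v. e = {u, v} \<and> u \<noteq> v \<and> l = d u v)"

definition edge_rel :: "'a set set \<Rightarrow> ('a \<times> 'a) set" where
  "edge_rel R = {(u, v). {u, v} \<in> R}"

definition connected_in :: "'a set set \<Rightarrow> 'a set \<Rightarrow> bool" where
  "connected_in R p \<longleftrightarrow> (\<exists>u v. p = {u, v} \<and> (u, v) \<in> (edge_rel R)\<^sup>*)"

text \<open>Cumulative terminal set after step i (steps are 0-based): union of Z_0..Z_i.\<close>
definition cum :: "'a set list \<Rightarrow> nat \<Rightarrow> 'a set" where
  "cum Z i = (\<Union>j\<in>{j. j \<le> i \<and> j < length Z}. Z ! j)"

text \<open>feas i is the feasibility function F_i, applied to the list [C_0,...,C_i];
  load i is the load function rho_i on subsets of {0..i}.\<close>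
record 'a nd_inst =
  verts :: "'a set"
  dist :: "'a \<Rightarrow> 'a \<Rightarrow> real"
  reqs :: "'a set list"
  feas :: "nat \<Rightarrow> 'a set list list \<Rightarrow> bool"
  load :: "nat \<Rightarrow> nat set \<Rightarrow> real"

text \<open>A response (R_i, C_i): a set of edges and an ordered list of pairs.\<close>
type_synonym 'a resp = "'a set set \<times> 'a set list"

definition load_fn :: "nat \<Rightarrow> (nat \<Rightarrow> nat set \<Rightarrow> real) \<Rightarrow> bool" where
  "load_fn r \<rho> \<longleftrightarrow> (\<forall>i<r.
     (\<forall>A B. A \<subseteq> {0..i} \<longrightarrow> B \<subseteq> {0..i} \<longrightarrow> \<rho> i (A \<union> B) \<le> \<rho> i A + \<rho> i B) \<and>
     (\<forall>A B. A \<subseteq> B \<longrightarrow> B \<subseteq> {0..i} \<longrightarrow> \<rho> i A \<le> \<rho> i B) \<and>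
     (\<forall>A. A \<subseteq> {0..i} \<longrightarrow> (\<rho> i A = 0 \<longleftrightarrow> A = {})) \<and>
     (\<forall>k A. i \<le> k \<longrightarrow> k < r \<longrightarrow> A \<subseteq> {0..i} \<longrightarrow> \<rho> k A = \<rho> i A))"

definition wf_inst :: "'a nd_inst \<Rightarrow> bool" where
  "wf_inst I \<longleftrightarrow> fin_metric (verts I) (dist I) \<and> (\<forall>Z\<in>set (reqs I). Z \<subseteq> verts I)
     \<and> load_fn (length (reqs I)) (load I)"

definition rho :: "'a nd_inst \<Rightarrow> nat set \<Rightarrow> real" where
  "rho I A = load I (Max A) A"

definition feasible :: "'a nd_inst \<Rightarrow> 'a resp list \<Rightarrow> bool" where
  "feasible I sol \<longleftrightarrow> length sol = length (reqs I) \<and>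
     (\<forall>i<length sol.
        fst (sol ! i) \<subseteq> edges (verts I) \<and>
        set (snd (sol ! i)) \<subseteq> edges (cum (reqs I) i) \<and>
        feas I i (map snd (take (Suc i) sol)) \<and>
        (\<forall>p\<in>set (snd (sol ! i)). connected_in (fst (sol ! i)) p))"

definition cost :: "'a nd_inst \<Rightarrow> 'a resp list \<Rightarrow> real" where
  "cost I sol = (\<Sum>e\<in>(\<Union>i<length sol. fst (sol ! i)).
      edge_len (dist I) e * rho I {i. i < length sol \<and> e \<in> fst (sol ! i)})"

definition OPT :: "'a nd_inst \<Rightarrow> real" where
  "OPT I = Inf (cost I ` {sol. feasible I sol})"

type_synonym 'a nd_alg = "'a nd_inst \<Rightarrow> nat \<Rightarrow> 'a resp"

definition prefix_eq :: "'a nd_inst \<Rightarrow> 'a nd_inst \<Rightarrow> nat \<Rightarrow> bool" where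
  "prefix_eq I J i \<longleftrightarrow> verts I = verts J \<and> dist I = dist J \<and>
     i < length (reqs I) \<and> i < length (reqs J) \<and>
     take (Suc i) (reqs I) = take (Suc i) (reqs J) \<and>
     (\<forall>j\<le>i. feas I j = feas J j \<and> load I j = load J j)"

definition online_alg :: "'a nd_alg \<Rightarrow> bool" where
  "online_alg A \<longleftrightarrow> (\<forall>I J i. prefix_eq I J i \<longrightarrow> A I i = A J i)"

definition run :: "'a nd_alg \<Rightarrow> 'a nd_inst \<Rightarrow> 'a resp list" where
  "run A I = map (A I) [0..<length (reqs I)]"

text \<open>A (possibly randomized) online algorithm is a distribution over deterministic online
  algorithms; c-competitive on the instance class Q.\<close>
definition competitive :: "'a nd_inst set \<Rightarrow> 'a nd_alg pmf \<Rightarrow> real \<Rightarrow> bool" where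
  "competitive Q Alg c \<longleftrightarrow> (\<forall>A\<in>set_pmf Alg. online_alg A) \<and>
     (\<forall>I\<in>Q. (\<exists>sol. feasible I sol) \<longrightarrow>
        (\<forall>A\<in>set_pmf Alg. feasible I (run A I)) \<and>
        (\<integral>\<^sup>+ A. ennreal (cost I (run A I)) \<partial>measure_pmf Alg) \<le> ennreal (c * OPT I))"

definition over_metrics :: "'a nd_inst set \<Rightarrow> ('a set \<times> ('a \<Rightarrow> 'a \<Rightarrow> real)) set \<Rightarrow> 'a nd_inst set" where
  "over_metrics P MM = {I\<in>P. (verts I, dist I) \<in> MM}"

definition is_online_emb :: "'a set \<Rightarrow> ('a \<Rightarrow> 'a \<Rightarrow> real) \<Rightarrow> 'a set list \<Rightarrow>
    'a set \<Rightarrow> ('a \<Rightarrow> 'a \<Rightarrow> real) \<Rightarrow> (nat \<Rightarrow> 'a \<Rightarrow> 'a) \<Rightarrow> bool" where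
  "is_online_emb V d Z M dM f \<longleftrightarrow> (\<forall>i<length Z.
     f i ` cum Z i \<subseteq> M \<and>
     (\<forall>j\<le>i. \<forall>z\<in>cum Z j. f i z = f j z) \<and>
     (\<forall>u\<in>cum Z i. \<forall>v\<in>cum Z i. d u v \<le> dM (f i u) (f i v)))"

text \<open>Output of a (deterministic) embedding algorithm: target metric (tgt, tdist), the maps
  f_i (emap), the sets M_i (esub) and the extension maps F_i (eF) and H_i (eH).\<close>
record 'a emb =
  tgt :: "'a set"
  tdist :: "'a \<Rightarrow> 'a \<Rightarrow> real"
  emap :: "nat \<Rightarrow> 'a \<Rightarrow> 'a"
  esub :: "nat \<Rightarrow> 'a set"
  eF :: "nat \<Rightarrow> 'a \<Rightarrow> 'a"
  eH :: "nat \<Rightarrow> 'a \<Rightarrow> 'a"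

type_synonym 'a emb_alg = "'a set \<times> ('a \<Rightarrow> 'a \<Rightarrow> real) \<times> 'a set list \<Rightarrow> 'a emb"

definition online_emb_alg :: "'a emb_alg \<Rightarrow> bool" where
  "online_emb_alg E \<longleftrightarrow>
     (\<forall>V d Z Z'. tgt (E (V, d, Z)) = tgt (E (V, d, Z')) \<and> tdist (E (V, d, Z)) = tdist (E (V, d, Z'))) \<and>
     (\<forall>V d Z Z' i. i < length Z \<longrightarrow> i < length Z' \<longrightarrow> take (Suc i) Z = take (Suc i) Z' \<longrightarrow>
        emap (E (V, d, Z)) i = emap (E (V, d, Z')) i \<and>
        esub (E (V, d, Z)) i = esub (E (V, d, Z')) i \<and>
        eF (E (V, d, Z)) i = eF (E (V, d, Z')) i \<and>
        eH (E (V, d, Z)) i = eH (E (V, d, Z')) i)"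

text \<open>Conditions of full extendability w.r.t. M_0 \<subseteq> ... \<subseteq> M_{r-1} \<subseteq> M that hold per
  embedding: (ii) without the stretch bound (which is imposed in expectation separately),
  (iii) and (iv).\<close>
definition fully_ext :: "'a set \<Rightarrow> ('a \<Rightarrow> 'a \<Rightarrow> real) \<Rightarrow> 'a set list \<Rightarrow> 'a emb \<Rightarrow> bool" where
  "fully_ext V d Z e \<longleftrightarrow>
     (\<forall>i<length Z. esub e i \<subseteq> tgt e) \<and>
     (\<forall>i. Suc i < length Z \<longrightarrow> esub e i \<subseteq> esub e (Suc i)) \<and>
     (\<forall>i<length Z. (\<forall>u\<in>V. eF e i u \<in> tgt e) \<and> (\<forall>z\<in>cum Z i. eF e i z = emap e i z)) \<and>
     (\<forall>i<length Z. (\<forall>x\<in>esub e i. eH e i x \<in> V) \<and>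
        (\<forall>z\<in>cum Z i. emap e i z \<in> esub e i \<and> eH e i (emap e i z) = z) \<and>
        (\<forall>x\<in>esub e i. \<forall>y\<in>esub e i. d (eH e i x) (eH e i y) \<le> tdist e x y)) \<and>
     (\<forall>i. Suc i < length Z \<longrightarrow> (\<forall>x\<in>esub e i. eH e (Suc i) x = eH e i x))"

definition embeds_fully_ext :: "'a nd_inst set \<Rightarrow> ('a set \<times> ('a \<Rightarrow> 'a \<Rightarrow> real)) set \<Rightarrow>
    real \<Rightarrow> 'a emb_alg pmf \<Rightarrow> bool" where
  "embeds_fully_ext P MM \<alpha> Emb \<longleftrightarrow> (\<forall>E\<in>set_pmf Emb. online_emb_alg E) \<and>
     (\<forall>I\<in>P.
        (\<forall>E\<in>set_pmf Emb.
           (tgt (E (verts I, dist I, reqs I)), tdist (E (verts I, dist I, reqs I))) \<in> MM \<and>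
           is_online_emb (verts I) (dist I) (reqs I) (tgt (E (verts I, dist I, reqs I)))
             (tdist (E (verts I, dist I, reqs I))) (emap (E (verts I, dist I, reqs I))) \<and>
           fully_ext (verts I) (dist I) (reqs I) (E (verts I, dist I, reqs I))) \<and>
        (\<forall>i<length (reqs I). \<forall>u\<in>verts I. \<forall>v\<in>verts I.
           (\<integral>\<^sup>+ E. ennreal (tdist (E (verts I, dist I, reqs I))
                      (eF (E (verts I, dist I, reqs I)) i u) (eF (E (verts I, dist I, reqs I)) i v))
              \<partial>measure_pmf Emb) \<le> ennreal (\<alpha> * dist I u v)))"

definition induced :: "'a nd_inst \<Rightarrow> 'a set \<Rightarrow> ('a \<Rightarrow> 'a \<Rightarrow> real) \<Rightarrow> (nat \<Rightarrow> 'a \<Rightarrow> 'a) \<Rightarrow> 'a nd_inst" where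
  "induced I M dM f = \<lparr>verts = M, dist = dM,
     reqs = map (\<lambda>i. f i ` (reqs I ! i)) [0..<length (reqs I)],
     feas = (\<lambda>i Cs. feas I i (map (map (\<lambda>p. inv_into (cum (reqs I) i) (f i) ` p)) Cs)),
     load = load I\<rparr>"

definition compatible :: "'a nd_inst set \<Rightarrow> 'a emb_alg pmf \<Rightarrow> 'a nd_alg pmf \<Rightarrow> bool" where
  "compatible P Emb Alg \<longleftrightarrow> (\<forall>I\<in>P. \<forall>E\<in>set_pmf Emb. \<forall>A\<in>set_pmf Alg.
     (let e = E (verts I, dist I, reqs I);
          J = induced I (tgt e) (tdist e) (emap e)
      in \<forall>i<length (reqs I). \<Union> (fst (A J i)) \<subseteq> esub e i))"

definition nd_problem :: "'a nd_inst set \<Rightarrow> bool" where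
  "nd_problem P \<longleftrightarrow> (\<forall>I\<in>P. wf_inst I) \<and>
     (\<forall>I\<in>P. \<forall>M dM f. fin_metric M dM \<and> is_online_emb (verts I) (dist I) (reqs I) M dM f
        \<longrightarrow> induced I M dM f \<in> P)"

end

theory Submission
  imports Defs
begin

text \<open>Run the algorithm for \<open>\<M>\<close> on the instance induced by the embedding and pull its
  answer back: edges of the target metric are mapped into \<open>V\<close> by the non-expansive maps
  \<open>H\<^sub>i\<close>, which makes no edge longer, and edges that get identified only lose load by
  subadditivity of \<open>\<rho>\<close>; demanded pairs stay connected because \<open>H\<^sub>i\<close> inverts \<open>f\<^sub>i\<close>
  on the terminals. So the pulled-back solution costs at most what the algorithm pays, which
  is at most \<open>\<beta>\<close> times the optimum of the induced instance. Conversely, pushing an optimal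
  solution of the original instance forward along the last extension \<open>F\<^sub>r\<^sub>-\<^sub>1\<close> gives a
  feasible solution of the induced instance whose edges are stretched by \<open>\<alpha>\<close> in
  expectation; hence the induced optimum is at most \<open>\<alpha>\<close> times the original one in
  expectation.\<close>

lemma edges_iff: "e \<in> edges S \<longleftrightarrow> (\<exists>u v. e = {u, v} \<and> u \<in> S \<and> v \<in> S \<and> u \<noteq> v)"
  unfolding edges_def by blast

lemma finite_edges: "finite S \<Longrightarrow> finite (edges S)"
  by (rule finite_subset[of _ "Pow S"]) (auto simp: edges_iff)

lemma edges_mono: "S \<subseteq> T \<Longrightarrow> edges S \<subseteq> edges T"
  unfolding edges_def by blast

lemma edge_len_doubleton:
  assumes "fin_metric V d" "u \<in> V" "v \<in> V" "u \<noteq> v"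
  shows "edge_len d {u, v} = d u v"
  unfolding edge_len_def
proof (rule the_equality)
  show "\<exists>a b. {u, v} = {a, b} \<and> a \<noteq> b \<and> d u v = d a b"
    using assms(4) by blast
next
  fix l assume "\<exists>a b. {u, v} = {a, b} \<and> a \<noteq> b \<and> l = d a b"
  then show "l = d u v"
    using assms by (auto simp: doubleton_eq_iff fin_metric_def)
qed

lemma edge_len_nonneg:
  assumes "fin_metric V d" "e \<in> edges V"
  shows "0 \<le> edge_len d e"
  using assms edge_len_doubleton[OF assms(1)] by (auto simp: edges_iff fin_metric_def)

definition edge_image :: "('a \<Rightarrow> 'b) \<Rightarrow> 'a set set \<Rightarrow> 'b set set" where
  "edge_image h R = {h ` e | e. e \<in> R \<and> card (h ` e) = 2}"

lemma edge_image_subset_edges: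
  assumes "\<And>e. e \<in> R \<Longrightarrow> h ` e \<subseteq> S"
  shows "edge_image h R \<subseteq> edges S"
  using assms by (fastforce simp: edge_image_def edges_iff card_2_iff)

lemma edge_image_cong:
  assumes "\<And>x. x \<in> \<Union>R \<Longrightarrow> h x = h' x"
  shows "edge_image h R = edge_image h' R"
proof -
  have "\<And>e. e \<in> R \<Longrightarrow> h ` e = h' ` e"
    using assms by (meson UnionI image_cong)
  then show ?thesis
    unfolding edge_image_def by metis
qed

lemma rtrancl_edge_rel_edge_image:
  assumes "(u, v) \<in> (edge_rel R)\<^sup>*"
  shows "(h u, h v) \<in> (edge_rel (edge_image h R))\<^sup>*"
  using assms
proof (induction rule: rtrancl_induct)
  case base
  then show ?case by simp
next
  case (step y z)
  have "{y, z} \<in> R"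
    using step(2) by (simp add: edge_rel_def)
  have "(h y, h z) \<in> edge_rel (edge_image h R)" if "h y \<noteq> h z"
  proof -
    have "card (h ` {y, z}) = 2"
      using that by simp
    then have "h ` {y, z} \<in> edge_image h R"
      using \<open>{y, z} \<in> R\<close> unfolding edge_image_def by blast
    then show ?thesis
      by (simp add: edge_rel_def)
  qed
  then show ?case
    using step(3) by (cases "h y = h z") (auto intro: rtrancl_into_rtrancl)
qed

lemma connected_in_edge_image:
  assumes "connected_in R p"
  shows "connected_in (edge_image h R) (h ` p)"
proof -
  obtain u v where "p = {u, v}" "(u, v) \<in> (edge_rel R)\<^sup>*"
    using assms unfolding connected_in_def by blast
  then show ?thesis
    unfolding connected_in_def using rtrancl_edge_rel_edge_image[of u v R h] by auto
qed

lemma cum_mono: "j \<le> i \<Longrightarrow> cum Z j \<subseteq> cum Z i"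
  unfolding cum_def by (auto intro: order_trans)

lemma cum_cong:
  assumes "take (Suc i) Z = take (Suc i) Z'" "i < length Z" "i < length Z'"
  shows "cum Z i = cum Z' i"
proof -
  have "\<And>j. j \<le> i \<Longrightarrow> Z ! j = Z' ! j"
    by (metis assms(1) le_imp_less_Suc nth_take)
  then show ?thesis
    unfolding cum_def using assms by auto
qed

lemma cum_online_emb_image:
  assumes "is_online_emb V d Z M dM f" "i < length Z"
  shows "cum (map (\<lambda>i. f i ` (Z ! i)) [0..<length Z]) i = f i ` cum Z i"
proof -
  have "f j z = f i z" if "j \<le> i" "z \<in> Z ! j" for j z
  proof -
    have "z \<in> cum Z j"
      using assms(2) that unfolding cum_def by auto
    then show ?thesis
      using assms that unfolding is_online_emb_def by auto
  qed
  then show ?thesis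
    unfolding cum_def using assms(2) by auto
qed

section \<open>Load functions\<close>

text \<open>Only nonempty sets of steps are constrained: \<open>rho I {} = load I (Max {}) {}\<close> is a junk
  value.\<close>
definition nonneg_subadditive :: "nat \<Rightarrow> (nat set \<Rightarrow> real) \<Rightarrow> bool" where
  "nonneg_subadditive r \<rho> \<longleftrightarrow>
     (\<forall>A. A \<noteq> {} \<longrightarrow> A \<subseteq> {..<r} \<longrightarrow> 0 \<le> \<rho> A) \<and>
     (\<forall>A B. A \<noteq> {} \<longrightarrow> B \<noteq> {} \<longrightarrow> A \<subseteq> {..<r} \<longrightarrow> B \<subseteq> {..<r} \<longrightarrow> \<rho> (A \<union> B) \<le> \<rho> A + \<rho> B)"

lemma nonneg_subadditive_nonneg:
  "nonneg_subadditive r \<rho> \<Longrightarrow> A \<noteq> {} \<Longrightarrow> A \<subseteq> {..<r} \<Longrightarrow> 0 \<le> \<rho> A"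
  unfolding nonneg_subadditive_def by blast

lemma nonneg_subadditive_Un_le:
  "nonneg_subadditive r \<rho> \<Longrightarrow> A \<noteq> {} \<Longrightarrow> B \<noteq> {} \<Longrightarrow> A \<subseteq> {..<r} \<Longrightarrow> B \<subseteq> {..<r} \<Longrightarrow>
    \<rho> (A \<union> B) \<le> \<rho> A + \<rho> B"
  unfolding nonneg_subadditive_def by blast

text \<open>Consistency of the load functions lets \<open>\<rho> A\<close>, \<open>\<rho> B\<close> and \<open>\<rho> (A \<union> B)\<close> all be
  evaluated with the single load function of index \<open>Max (A \<union> B)\<close>.\<close>
lemma load_fn_nonneg_subadditive:
  assumes "load_fn r (load I)"
  shows "nonneg_subadditive r (rho I)"
proof -
  note load = assms[unfolded load_fn_def, rule_format]
  note subadditive = load[THEN conjunct1, rule_format]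
  note mono = load[THEN conjunct2, THEN conjunct1, rule_format]
  note zero = load[THEN conjunct2, THEN conjunct2, THEN conjunct1, rule_format]
  note consistent = load[THEN conjunct2, THEN conjunct2, THEN conjunct2, rule_format]
  have Max: "Max A \<in> A" "A \<subseteq> {0..Max A}" if "A \<noteq> {}" "A \<subseteq> {..<r}" for A
    using that finite_subset[OF that(2)] by auto
  have rho_eq: "rho I A = load I m A" if "A \<noteq> {}" "A \<subseteq> {..<r}" "A \<subseteq> {0..m}" "m < r" for A m
  proof -
    have "Max A \<le> m" "Max A < r"
      using Max[OF that(1,2)] that(2,3) by auto
    then show ?thesis
      unfolding rho_def using consistent[of "Max A" m A] Max[OF that(1,2)] that(4) by simp
  qed
  have "0 \<le> rho I A" if "A \<noteq> {}" "A \<subseteq> {..<r}" for A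
  proof -
    have "Max A < r"
      using Max[OF that] that(2) by auto
    then have "load I (Max A) {} \<le> load I (Max A) A" "load I (Max A) {} = 0"
      using mono[of "Max A" "{}" A] zero[of "Max A" "{}"] Max[OF that] by auto
    then show ?thesis
      unfolding rho_def by simp
  qed
  moreover have "rho I (A \<union> B) \<le> rho I A + rho I B"
    if "A \<noteq> {}" "B \<noteq> {}" "A \<subseteq> {..<r}" "B \<subseteq> {..<r}" for A B
  proof -
    define m where "m = Max (A \<union> B)"
    have "m \<in> A \<union> B" "A \<union> B \<subseteq> {0..m}"
      using Max[of "A \<union> B"] that unfolding m_def by auto
    then have "m < r" "A \<subseteq> {0..m}" "B \<subseteq> {0..m}"
      using that by auto
    then show ?thesis
      using subadditive[of m A B] rho_eq[of A m] rho_eq[of B m] rho_eq[of "A \<union> B" m] that by simp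
  qed
  ultimately show ?thesis
    unfolding nonneg_subadditive_def by blast
qed

lemma nonneg_subadditive_UNION_le:
  assumes "nonneg_subadditive r \<rho>" "finite K" "K \<noteq> {}"
    and "\<And>k. k \<in> K \<Longrightarrow> A k \<noteq> {} \<and> A k \<subseteq> {..<r}"
  shows "\<rho> (\<Union>k\<in>K. A k) \<le> (\<Sum>k\<in>K. \<rho> (A k))"
  using assms(2-4)
proof (induction K rule: finite_ne_induct)
  case (singleton x)
  then show ?case by simp
next
  case (insert x K)
  have "(\<Union>k\<in>K. A k) \<noteq> {}" "(\<Union>k\<in>K. A k) \<subseteq> {..<r}"
    using insert.hyps(2) insert.prems by auto
  then have "\<rho> (A x \<union> (\<Union>k\<in>K. A k)) \<le> \<rho> (A x) + \<rho> (\<Union>k\<in>K. A k)"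
    using nonneg_subadditive_Un_le[OF assms(1)] insert.prems by simp
  also have "\<dots> \<le> \<rho> (A x) + (\<Sum>k\<in>K. \<rho> (A k))"
    using insert.IH insert.prems by simp
  finally show ?case
    using insert.hyps(1,3) by simp
qed

text \<open>The steps using an image edge are exactly the steps using one of its preimages.\<close>
lemma load_edge_image_le:
  assumes \<rho>: "nonneg_subadditive r \<rho>" and fin: "finite (\<Union>i<r. R i)"
    and y: "y \<in> (\<Union>i<r. edge_image h (R i))"
  shows "\<rho> {i. i < r \<and> y \<in> edge_image h (R i)}
    \<le> (\<Sum>x\<in>{x \<in> (\<Union>i<r. R i). card (h ` x) = 2 \<and> h ` x = y}. \<rho> {i. i < r \<and> x \<in> R i})"
proof -
  define G where "G = {x \<in> (\<Union>i<r. R i). card (h ` x) = 2 \<and> h ` x = y}"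
  have "finite G"
    using fin unfolding G_def by simp
  moreover have "G \<noteq> {}"
    using y unfolding G_def edge_image_def by blast
  ultimately have "\<rho> (\<Union>x\<in>G. {i. i < r \<and> x \<in> R i}) \<le> (\<Sum>x\<in>G. \<rho> {i. i < r \<and> x \<in> R i})"
    by (intro nonneg_subadditive_UNION_le[OF \<rho>]) (auto simp: G_def)
  moreover have "{i. i < r \<and> y \<in> edge_image h (R i)} = (\<Union>x\<in>G. {i. i < r \<and> x \<in> R i})"
    unfolding G_def edge_image_def by blast
  ultimately show ?thesis
    unfolding G_def by simp
qed

lemma edge_image_cost_le:
  fixes R :: "nat \<Rightarrow> 'a set set" and h :: "'a \<Rightarrow> 'b"
  assumes \<rho>: "nonneg_subadditive r \<rho>" and fin: "finite (\<Union>i<r. R i)"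
    and len_le: "\<And>x. x \<in> (\<Union>i<r. R i) \<Longrightarrow> card (h ` x) = 2 \<Longrightarrow> len' (h ` x) \<le> len x"
    and len_nonneg: "\<And>x. x \<in> (\<Union>i<r. R i) \<Longrightarrow> 0 \<le> len x"
    and len'_nonneg: "\<And>y. y \<in> (\<Union>i<r. edge_image h (R i)) \<Longrightarrow> 0 \<le> len' y"
  shows "(\<Sum>y\<in>(\<Union>i<r. edge_image h (R i)). len' y * \<rho> {i. i < r \<and> y \<in> edge_image h (R i)})
       \<le> (\<Sum>x\<in>(\<Union>i<r. R i). len x * \<rho> {i. i < r \<and> x \<in> R i})"
proof -
  define U where "U = (\<Union>i<r. R i)"
  define U2 where "U2 = {x \<in> U. card (h ` x) = 2}"
  define S where "S x = {i. i < r \<and> x \<in> R i}" for x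
  have "finite U2"
    using fin unfolding U2_def U_def by simp
  have image_U2: "(\<Union>i<r. edge_image h (R i)) = (\<lambda>x. h ` x) ` U2"
    unfolding U2_def U_def edge_image_def by blast
  have S_nonneg: "0 \<le> \<rho> (S x)" if "x \<in> U" for x
    using that unfolding S_def U_def by (intro nonneg_subadditive_nonneg[OF \<rho>]) auto
  have "len' y * \<rho> {i. i < r \<and> y \<in> edge_image h (R i)} \<le> (\<Sum>x\<in>{x \<in> U2. h ` x = y}. len x * \<rho> (S x))"
    if y: "y \<in> (\<Union>i<r. edge_image h (R i))" for y
  proof -
    have "len' y * \<rho> {i. i < r \<and> y \<in> edge_image h (R i)} \<le> len' y * (\<Sum>x\<in>{x \<in> U2. h ` x = y}. \<rho> (S x))"
      using load_edge_image_le[OF \<rho> fin y] len'_nonneg[OF y]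
      unfolding U2_def U_def S_def by (intro mult_left_mono) simp_all
    also have "\<dots> = (\<Sum>x\<in>{x \<in> U2. h ` x = y}. len' (h ` x) * \<rho> (S x))"
      by (simp add: sum_distrib_left)
    also have "\<dots> \<le> (\<Sum>x\<in>{x \<in> U2. h ` x = y}. len x * \<rho> (S x))"
      using len_le S_nonneg by (intro sum_mono mult_right_mono) (auto simp: U2_def U_def)
    finally show ?thesis .
  qed
  then have "(\<Sum>y\<in>(\<Union>i<r. edge_image h (R i)). len' y * \<rho> {i. i < r \<and> y \<in> edge_image h (R i)})
      \<le> (\<Sum>y\<in>(\<Union>i<r. edge_image h (R i)). \<Sum>x\<in>{x \<in> U2. h ` x = y}. len x * \<rho> (S x))"
    by (rule sum_mono)
  also have "\<dots> = (\<Sum>x\<in>U2. len x * \<rho> (S x))"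
    using \<open>finite U2\<close> by (intro sum.group) (auto simp: image_U2)
  also have "\<dots> \<le> (\<Sum>x\<in>U. len x * \<rho> (S x))"
    using fin len_nonneg S_nonneg by (intro sum_mono2) (auto simp: U_def U2_def)
  finally show ?thesis
    unfolding U_def S_def .
qed

lemma cost_map_upt:
  assumes "\<And>i. i < n \<Longrightarrow> fst (s i) = R i"
  shows "cost K (map s [0..<n]) = (\<Sum>x\<in>(\<Union>i<n. R i). edge_len (dist K) x * rho K {i. i < n \<and> x \<in> R i})"
proof -
  have "(\<Union>i<n. fst (map s [0..<n] ! i)) = (\<Union>i<n. R i)"
    "\<And>x. {i. i < n \<and> x \<in> fst (map s [0..<n] ! i)} = {i. i < n \<and> x \<in> R i}"
    using assms by auto
  then show ?thesis
    unfolding cost_def by simp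
qed

lemma feasible_map_upt_iff:
  "feasible K (map s [0..<length (reqs K)]) \<longleftrightarrow>
    (\<forall>i<length (reqs K). fst (s i) \<subseteq> edges (verts K) \<and>
       set (snd (s i)) \<subseteq> edges (cum (reqs K) i) \<and>
       feas K i (map (snd \<circ> s) [0..<Suc i]) \<and>
       (\<forall>p\<in>set (snd (s i)). connected_in (fst (s i)) p))"
  unfolding feasible_def by (simp add: take_map del: upt_Suc)

lemma
  assumes "wf_inst K" "feasible K sol" "x \<in> (\<Union>i<length (reqs K). fst (sol ! i))"
  shows used_edge_in_edges: "x \<in> edges (verts K)"
    and used_edge_last_step: "length (reqs K) - 1 < length (reqs K)"
    and used_edge_len_nonneg: "0 \<le> edge_len (dist K) x"
    and used_edge_load_nonneg: "0 \<le> rho K {i. i < length (reqs K) \<and> x \<in> fst (sol ! i)}"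
proof -
  obtain i where i: "i < length (reqs K)" "x \<in> fst (sol ! i)"
    using assms(3) by blast
  then show "x \<in> edges (verts K)" "length (reqs K) - 1 < length (reqs K)"
    using assms(2) unfolding feasible_def by auto
  then show "0 \<le> edge_len (dist K) x"
    using assms(1) edge_len_nonneg unfolding wf_inst_def by blast
  have "nonneg_subadditive (length (reqs K)) (rho K)"
    using assms(1) load_fn_nonneg_subadditive unfolding wf_inst_def by blast
  then show "0 \<le> rho K {i. i < length (reqs K) \<and> x \<in> fst (sol ! i)}"
    using i by (intro nonneg_subadditive_nonneg) auto
qed

lemma cost_nonneg:
  assumes "wf_inst K" "feasible K sol"
  shows "0 \<le> cost K sol"
proof -
  have "length sol = length (reqs K)"
    using assms(2) unfolding feasible_def by simp
  then show ?thesis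
    unfolding cost_def using used_edge_len_nonneg[OF assms] used_edge_load_nonneg[OF assms]
    by (intro sum_nonneg mult_nonneg_nonneg) auto
qed

lemma
  assumes "wf_inst K" "feasible K sol"
  shows OPT_le_cost: "OPT K \<le> cost K sol"
    and OPT_nonneg: "0 \<le> OPT K"
proof -
  have "bdd_below (cost K ` {sol. feasible K sol})"
    using cost_nonneg[OF assms(1)] by (intro bdd_belowI[of _ 0]) auto
  then show "OPT K \<le> cost K sol"
    unfolding OPT_def using assms(2) by (intro cInf_lower) auto
  show "0 \<le> OPT K"
    unfolding OPT_def using assms cost_nonneg by (intro cInf_greatest) auto
qed

lemma cost_forget_pairs: "cost K (map (\<lambda>s. (fst s, [])) sol) = cost K sol"
proof -
  have edges: "(\<Union>i<length sol. fst (map (\<lambda>s. (fst s, [])) sol ! i)) = (\<Union>i<length sol. fst (sol ! i))"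
    by simp
  have steps: "\<And>x. {i. i < length sol \<and> x \<in> fst (map (\<lambda>s. (fst s, [])) sol ! i)}
      = {i. i < length sol \<and> x \<in> fst (sol ! i)}"
    by auto
  show ?thesis
    unfolding cost_def length_map edges steps ..
qed

text \<open>The cost does not see the lists of pairs, so it only takes the finitely many values
  given by sequences of edge sets; the infimum is therefore attained.\<close>
lemma ex_optimal_solution:
  assumes "wf_inst K" "feasible K sol"
  shows "\<exists>sol'. feasible K sol' \<and> cost K sol' = OPT K"
proof -
  define C where "C = cost K ` {sol. feasible K sol}"
  define L where "L = {xs. set xs \<subseteq> Pow (edges (verts K)) \<times> {[] :: 'a set list} \<and>
    length xs = length (reqs K)}"
  have "finite L"
    unfolding L_def using assms(1)
    by (intro finite_lists_length_eq) (simp add: wf_inst_def fin_metric_def finite_edges)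
  moreover have "C \<subseteq> cost K ` L"
  proof
    fix c assume "c \<in> C"
    then obtain sol where sol: "feasible K sol" "c = cost K sol"
      unfolding C_def by blast
    then have "\<forall>s\<in>set sol. fst s \<subseteq> edges (verts K)"
      unfolding feasible_def by (metis in_set_conv_nth)
    then have "map (\<lambda>s. (fst s, [])) sol \<in> L"
      using sol(1) unfolding L_def feasible_def by auto
    then show "c \<in> cost K ` L"
      using sol(2) cost_forget_pairs by (metis image_eqI)
  qed
  ultimately have "finite C"
    using finite_surj by blast
  moreover have "C \<noteq> {}"
    using assms(2) unfolding C_def by blast
  ultimately have "OPT K \<in> C"
    unfolding OPT_def C_def[symmetric] by (simp add: cInf_eq_Min)
  then show ?thesis
    unfolding C_def by auto
qed

section \<open>The pulled-back algorithm\<close>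

definition embedding_at :: "'a emb_alg \<Rightarrow> 'a nd_inst \<Rightarrow> 'a emb" where
  "embedding_at E I = E (verts I, dist I, reqs I)"

definition induced_by :: "'a emb_alg \<Rightarrow> 'a nd_inst \<Rightarrow> 'a nd_inst" where
  "induced_by E I =
     induced I (tgt (embedding_at E I)) (tdist (embedding_at E I)) (emap (embedding_at E I))"

definition pullback :: "'a emb_alg \<Rightarrow> 'a nd_alg \<Rightarrow> 'a nd_alg" where
  "pullback E A I i =
     (edge_image (eH (embedding_at E I) i) (fst (A (induced_by E I) i)),
      map (\<lambda>p. inv_into (cum (reqs I) i) (emap (embedding_at E I) i) ` p) (snd (A (induced_by E I) i)))"

lemma induced_by_simps:
  "verts (induced_by E I) = tgt (embedding_at E I)"
  "dist (induced_by E I) = tdist (embedding_at E I)"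
  "reqs (induced_by E I) = map (\<lambda>i. emap (embedding_at E I) i ` (reqs I ! i)) [0..<length (reqs I)]"
  "length (reqs (induced_by E I)) = length (reqs I)"
  "feas (induced_by E I) = (\<lambda>i Cs. feas I i
     (map (map (\<lambda>p. inv_into (cum (reqs I) i) (emap (embedding_at E I) i) ` p)) Cs))"
  "load (induced_by E I) = load I"
  by (simp_all add: induced_by_def induced_def)

lemma rho_induced_by: "rho (induced_by E I) = rho I"
  by (simp add: rho_def[abs_def] induced_by_simps)

lemma prefix_eq_take:
  assumes "prefix_eq I I' i" "j \<le> i"
  shows "take (Suc j) (reqs I) = take (Suc j) (reqs I')"
  using assms unfolding prefix_eq_def by (metis Suc_le_mono min.absorb1 take_take)

lemma prefix_eq_induced_by:
  assumes E: "online_emb_alg E" and pre: "prefix_eq I I' i"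
  shows "prefix_eq (induced_by E I) (induced_by E I') i"
    and "\<And>j. j \<le> i \<Longrightarrow> emap (embedding_at E I) j = emap (embedding_at E I') j"
    and "\<And>j. j \<le> i \<Longrightarrow> eH (embedding_at E I) j = eH (embedding_at E I') j"
    and "\<And>j. j \<le> i \<Longrightarrow> cum (reqs I) j = cum (reqs I') j"
proof -
  have same_metric: "verts I = verts I'" "dist I = dist I'" and len: "i < length (reqs I)" "i < length (reqs I')"
    and same: "\<And>j. j \<le> i \<Longrightarrow> feas I j = feas I' j \<and> load I j = load I' j"
    using pre unfolding prefix_eq_def by auto
  have at: "embedding_at E I = E (verts I, dist I, reqs I)" "embedding_at E I' = E (verts I, dist I, reqs I')"
    unfolding embedding_at_def same_metric by simp_all
  note target = E[unfolded online_emb_alg_def, THEN conjunct1, rule_format]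
  note steps = E[unfolded online_emb_alg_def, THEN conjunct2, rule_format]
  show emap: "emap (embedding_at E I) j = emap (embedding_at E I') j"
    and eH: "eH (embedding_at E I) j = eH (embedding_at E I') j" if "j \<le> i" for j
    unfolding at using steps[of j "reqs I" "reqs I'"] prefix_eq_take[OF pre that] that len by auto
  show cum: "cum (reqs I) j = cum (reqs I') j" if "j \<le> i" for j
    using prefix_eq_take[OF pre that] that len by (intro cum_cong) auto
  have nth: "reqs I ! j = reqs I' ! j" if "j \<le> i" for j
    using prefix_eq_take[OF pre order_refl] that by (metis le_imp_less_Suc nth_take)
  show "prefix_eq (induced_by E I) (induced_by E I') i"
    unfolding prefix_eq_def induced_by_simps
    using len same emap cum nth target[of "verts I" "dist I" "reqs I" "reqs I'"]
    by (auto simp: at take_map)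
qed

lemma online_alg_pullback:
  assumes "online_emb_alg E" "online_alg A"
  shows "online_alg (pullback E A)"
  unfolding online_alg_def
proof (intro allI impI)
  fix I I' :: "'a nd_inst" and i
  assume pre: "prefix_eq I I' i"
  then have "A (induced_by E I) i = A (induced_by E I') i"
    using assms prefix_eq_induced_by(1) unfolding online_alg_def by blast
  then show "pullback E A I i = pullback E A I' i"
    unfolding pullback_def using prefix_eq_induced_by(2-4)[OF assms(1) pre order_refl] by simp
qed

section \<open>An instance with a fully extendable embedding\<close>

locale embedded_instance =
  fixes I :: "'a nd_inst" and E :: "'a emb_alg"
  assumes wf: "wf_inst I"
    and online_emb: "is_online_emb (verts I) (dist I) (reqs I)
      (tgt (embedding_at E I)) (tdist (embedding_at E I)) (emap (embedding_at E I))"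
    and extendable: "fully_ext (verts I) (dist I) (reqs I) (embedding_at E I)"
    and target_metric: "fin_metric (tgt (embedding_at E I)) (tdist (embedding_at E I))"
begin

abbreviation "e \<equiv> embedding_at E I"
abbreviation "r \<equiv> length (reqs I)"
abbreviation "Z \<equiv> reqs I"
abbreviation "V \<equiv> verts I"
abbreviation "d \<equiv> dist I"
abbreviation "J \<equiv> induced_by E I"
abbreviation "f \<equiv> emap e"
abbreviation "g i \<equiv> inv_into (cum Z i) (f i)"
abbreviation "F \<equiv> eF e (r - 1)"

lemma metric_V: "fin_metric V d"
  using wf unfolding wf_inst_def by blast

lemma subadditive_rho: "nonneg_subadditive r (rho I)"
  using wf load_fn_nonneg_subadditive unfolding wf_inst_def by blast

lemma cum_reqs_J: "i < r \<Longrightarrow> cum (reqs J) i = f i ` cum Z i"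
  unfolding induced_by_simps by (rule cum_online_emb_image[OF online_emb])

lemma f_extends: "j \<le> i \<Longrightarrow> i < r \<Longrightarrow> z \<in> cum Z j \<Longrightarrow> f i z = f j z"
  using online_emb unfolding is_online_emb_def by blast

lemma H_f: "i < r \<Longrightarrow> z \<in> cum Z i \<Longrightarrow> f i z \<in> esub e i \<and> eH e i (f i z) = z"
  using extendable unfolding fully_ext_def by blast

lemma inv_f:
  assumes "i < r" "z \<in> cum Z i"
  shows "g i (f i z) = z"
proof -
  have "inj_on (f i) (cum Z i)"
    using H_f[OF assms(1)] by (intro inj_on_inverseI[where g = "eH e i"]) blast
  then show ?thesis
    using assms(2) by (rule inv_into_f_f)
qed

lemma H_in_V: "i < r \<Longrightarrow> x \<in> esub e i \<Longrightarrow> eH e i x \<in> V"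
  using extendable unfolding fully_ext_def by blast

lemma H_nonexpansive:
  "i < r \<Longrightarrow> x \<in> esub e i \<Longrightarrow> y \<in> esub e i \<Longrightarrow> d (eH e i x) (eH e i y) \<le> tdist e x y"
  using extendable unfolding fully_ext_def by blast

lemma esub_tgt: "i < r \<Longrightarrow> esub e i \<subseteq> tgt e"
  using extendable unfolding fully_ext_def by blast

lemma esub_Suc: "Suc i < r \<Longrightarrow> esub e i \<subseteq> esub e (Suc i)"
  using extendable unfolding fully_ext_def by blast

lemma H_Suc: "Suc i < r \<Longrightarrow> x \<in> esub e i \<Longrightarrow> eH e (Suc i) x = eH e i x"
  using extendable unfolding fully_ext_def by blast

lemma eF_in_tgt: "i < r \<Longrightarrow> u \<in> V \<Longrightarrow> eF e i u \<in> tgt e"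
  using extendable unfolding fully_ext_def by blast

lemma eF_f: "i < r \<Longrightarrow> z \<in> cum Z i \<Longrightarrow> eF e i z = f i z"
  using extendable unfolding fully_ext_def by blast

lemma esub_mono:
  assumes "j \<le> i" "i < r"
  shows "esub e j \<subseteq> esub e i"
  using assms
proof (induction i rule: dec_induct)
  case (step n)
  then show ?case
    using esub_Suc[of n] by simp
qed simp

lemma H_extends:
  assumes "j \<le> i" "i < r" "x \<in> esub e j"
  shows "eH e i x = eH e j x"
  using assms
proof (induction i rule: dec_induct)
  case (step n)
  then have "x \<in> esub e n"
    using esub_mono[of j n] by auto
  then show ?case
    using step H_Suc[of n x] by simp
qed simp

lemma pulled_back_pair:
  assumes "j \<le> i" "i < r" "p \<in> edges (cum (reqs J) j)"
  shows "g i ` p = g j ` p" "g i ` p = eH e i ` p" "g i ` p \<in> edges (cum Z i)"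
proof -
  have "j < r"
    using assms(1,2) by simp
  have "p \<in> edges (f j ` cum Z j)"
    using assms(3) cum_reqs_J[OF \<open>j < r\<close>] by simp
  then obtain z1 z2 where z: "p = {f j z1, f j z2}" "z1 \<in> cum Z j" "z2 \<in> cum Z j" "z1 \<noteq> z2"
    unfolding edges_iff by blast
  then have zi: "p = {f i z1, f i z2}" "z1 \<in> cum Z i" "z2 \<in> cum Z i"
    using f_extends[OF assms(1,2)] cum_mono[OF assms(1), of Z] by auto
  then have "g i ` p = {z1, z2}" "eH e i ` p = {z1, z2}"
    using inv_f[OF assms(2)] H_f[OF assms(2)] by simp_all
  moreover have "g j ` p = {z1, z2}"
    using z inv_f[OF \<open>j < r\<close>] by simp
  ultimately show "g i ` p = g j ` p" "g i ` p = eH e i ` p" "g i ` p \<in> edges (cum Z i)"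
    using z(4) zi(2,3) by (auto simp: edges_iff)
qed

lemma feasible_pullback:
  assumes feasible_J: "feasible J (run A J)"
    and compatible: "\<And>i. i < r \<Longrightarrow> \<Union> (fst (A J i)) \<subseteq> esub e i"
  shows "feasible I (run (pullback E A) I)"
proof -
  have J: "fst (A J i) \<subseteq> edges (tgt e) \<and> set (snd (A J i)) \<subseteq> edges (cum (reqs J) i) \<and>
      feas J i (map (snd \<circ> A J) [0..<Suc i]) \<and>
      (\<forall>p\<in>set (snd (A J i)). connected_in (fst (A J i)) p)" if "i < r" for i
    using feasible_J that unfolding run_def feasible_map_upt_iff by (simp add: induced_by_simps)
  show ?thesis
    unfolding run_def feasible_map_upt_iff
  proof (intro allI impI conjI ballI)
    fix i assume i: "i < r"
    show "fst (pullback E A I i) \<subseteq> edges V"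
      unfolding pullback_def fst_conv
      by (rule edge_image_subset_edges) (use compatible[OF i] H_in_V[OF i] in blast)
    show "set (snd (pullback E A I i)) \<subseteq> edges (cum Z i)"
      using J[OF i] pulled_back_pair(3)[OF order_refl i] by (auto simp: pullback_def)
    have "snd (pullback E A I j) = map (image (g i)) (snd (A J j))" if "j < Suc i" for j
    proof -
      have "j \<le> i" "j < r"
        using that i by auto
      then show ?thesis
        unfolding pullback_def snd_conv map_eq_conv using J pulled_back_pair(1)[OF _ i] by blast
    qed
    then have snds: "map (snd \<circ> pullback E A I) [0..<Suc i]
        = map (map (image (g i)) \<circ> (snd \<circ> A J)) [0..<Suc i]"
      by (intro map_cong) auto
    show "feas I i (map (snd \<circ> pullback E A I) [0..<Suc i])"
      using J[OF i] unfolding snds induced_by_simps(5) map_map by blast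
  next
    fix i q assume i: "i < r" and "q \<in> set (snd (pullback E A I i))"
    then obtain p where "p \<in> set (snd (A J i))" "q = g i ` p"
      by (auto simp: pullback_def)
    then show "connected_in (fst (pullback E A I i)) q"
      using J[OF i] pulled_back_pair(2)[OF order_refl i] connected_in_edge_image
      by (fastforce simp: pullback_def)
  qed
qed

lemma edge_len_eH_le:
  assumes "k < r" "x \<in> edges (esub e k)" "card (eH e k ` x) = 2"
  shows "edge_len d (eH e k ` x) \<le> edge_len (tdist e) x"
proof -
  obtain a b where ab: "x = {a, b}" "a \<in> esub e k" "b \<in> esub e k" "a \<noteq> b"
    using assms(2) unfolding edges_iff by blast
  then have "eH e k a \<noteq> eH e k b"
    using assms(3) by auto
  then have "edge_len d (eH e k ` x) = d (eH e k a) (eH e k b)"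
    using edge_len_doubleton[OF metric_V] H_in_V[OF assms(1)] ab by simp
  also have "\<dots> \<le> tdist e a b"
    using H_nonexpansive[OF assms(1) ab(2,3)] .
  also have "\<dots> = edge_len (tdist e) x"
  proof -
    have "a \<in> tgt e" "b \<in> tgt e"
      using esub_tgt[OF assms(1)] ab(2,3) by auto
    then show ?thesis
      using edge_len_doubleton[OF target_metric _ _ ab(4)] ab(1) by simp
  qed
  finally show ?thesis .
qed

lemma algorithm_edges_in_esub:
  assumes "feasible J (run A J)" "\<Union> (fst (A J i)) \<subseteq> esub e i" "i < r"
  shows "fst (A J i) \<subseteq> edges (esub e (r - 1))"
proof
  fix x assume x: "x \<in> fst (A J i)"
  have "fst (A J i) \<subseteq> edges (tgt e)"
    using assms(1,3) unfolding run_def feasible_map_upt_iff by (simp add: induced_by_simps)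
  then have "x \<in> edges (tgt e)"
    using x by blast
  then obtain a b where ab: "x = {a, b}" "a \<noteq> b"
    unfolding edges_iff by blast
  have "esub e i \<subseteq> esub e (r - 1)"
    using assms(3) by (intro esub_mono) auto
  then have "x \<subseteq> esub e (r - 1)"
    using x assms(2) by blast
  with ab show "x \<in> edges (esub e (r - 1))"
    unfolding edges_iff by blast
qed

lemma fst_pullback:
  assumes "\<Union> (fst (A J i)) \<subseteq> esub e i" "i < r"
  shows "fst (pullback E A I i) = edge_image (eH e (r - 1)) (fst (A J i))"
proof -
  have "eH e i x = eH e (r - 1) x" if "x \<in> \<Union> (fst (A J i))" for x
    using assms that by (intro H_extends[symmetric]) auto
  then show ?thesis
    unfolding pullback_def fst_conv by (rule edge_image_cong)
qed

lemma edge_image_eH_subset: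
  assumes "k < r" "R \<subseteq> edges (esub e k)"
  shows "edge_image (eH e k) R \<subseteq> edges V"
proof (rule edge_image_subset_edges)
  fix x assume "x \<in> R"
  then have "x \<subseteq> esub e k"
    using assms(2) by (auto simp: edges_iff)
  then show "eH e k ` x \<subseteq> V"
    using H_in_V[OF assms(1)] by blast
qed

text \<open>By (iv), every \<open>H\<^sub>i\<close> agrees with \<open>H\<^sub>r\<^sub>-\<^sub>1\<close> on the edges used at step \<open>i\<close>, so the
  pulled-back solution is the edge image of the algorithm's solution under the single map
  \<open>H\<^sub>r\<^sub>-\<^sub>1\<close>.\<close>
lemma cost_pullback_le:
  assumes feasible_J: "feasible J (run A J)"
    and compatible: "\<And>i. i < r \<Longrightarrow> \<Union> (fst (A J i)) \<subseteq> esub e i"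
  shows "cost I (run (pullback E A) I) \<le> cost J (run A J)"
proof (cases "r = 0")
  case True
  then show ?thesis
    by (simp add: run_def cost_def induced_by_simps)
next
  case False
  then have last: "r - 1 < r"
    by simp
  define H where "H = eH e (r - 1)"
  define R where "R i = fst (A J i)" for i
  have R_esub: "(\<Union>i<r. R i) \<subseteq> edges (esub e (r - 1))"
    unfolding R_def using algorithm_edges_in_esub[OF feasible_J compatible] by (intro UN_least) simp
  then have R_tgt: "(\<Union>i<r. R i) \<subseteq> edges (tgt e)"
    using edges_mono[OF esub_tgt[OF last]] by (rule order_trans)
  have image_V: "(\<Union>i<r. edge_image H (R i)) \<subseteq> edges V"
    unfolding H_def using R_esub by (intro UN_least edge_image_eH_subset[OF last]) auto
  have "cost I (run (pullback E A) I)
      = (\<Sum>y\<in>(\<Union>i<r. edge_image H (R i)). edge_len d y * rho I {i. i < r \<and> y \<in> edge_image H (R i)})"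
    unfolding run_def H_def R_def by (rule cost_map_upt) (simp add: fst_pullback compatible)
  also have "\<dots> \<le> (\<Sum>x\<in>(\<Union>i<r. R i). edge_len (tdist e) x * rho I {i. i < r \<and> x \<in> R i})"
  proof (rule edge_image_cost_le[OF subadditive_rho])
    show "finite (\<Union>i<r. R i)"
      by (rule finite_subset[OF R_tgt]) (use target_metric in \<open>simp add: fin_metric_def finite_edges\<close>)
    show "0 \<le> edge_len (tdist e) x" if "x \<in> (\<Union>i<r. R i)" for x
      using that R_tgt edge_len_nonneg[OF target_metric] by blast
    show "edge_len d (H ` x) \<le> edge_len (tdist e) x" if "x \<in> (\<Union>i<r. R i)" "card (H ` x) = 2" for x
      using that R_esub unfolding H_def by (intro edge_len_eH_le[OF last]) auto
    show "0 \<le> edge_len d y" if "y \<in> (\<Union>i<r. edge_image H (R i))" for y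
      using that image_V edge_len_nonneg[OF metric_V] by blast
  qed
  also have "\<dots> = cost J (run A J)"
  proof -
    have "cost J (run A J) = (\<Sum>x\<in>(\<Union>i<r. R i). edge_len (dist J) x * rho J {i. i < r \<and> x \<in> R i})"
      unfolding run_def induced_by_simps(4) by (rule cost_map_upt) (simp add: R_def)
    then show ?thesis
      by (simp add: induced_by_simps rho_induced_by)
  qed
  finally show ?thesis .
qed

lemma F_extends:
  assumes "i < r" "z \<in> cum Z i"
  shows "F z = f i z"
proof -
  have "i \<le> r - 1" "r - 1 < r"
    using assms(1) by auto
  have "z \<in> cum Z (r - 1)"
    using cum_mono[OF \<open>i \<le> r - 1\<close>, of Z] assms(2) by blast
  then have "F z = f (r - 1) z"
    by (rule eF_f[OF \<open>r - 1 < r\<close>])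
  also have "\<dots> = f i z"
    by (rule f_extends[OF \<open>i \<le> r - 1\<close> \<open>r - 1 < r\<close> assms(2)])
  finally show ?thesis .
qed

lemma inv_F: "i < r \<Longrightarrow> z \<in> cum Z i \<Longrightarrow> g i (F z) = z"
  using F_extends inv_f by simp

lemma edge_image_F_subset:
  assumes "i < r" "R \<subseteq> edges V"
  shows "edge_image F R \<subseteq> edges (tgt e)"
proof (rule edge_image_subset_edges)
  fix x assume "x \<in> R"
  then have "x \<subseteq> V"
    using assms(2) by (auto simp: edges_iff)
  moreover have "r - 1 < r"
    using assms(1) by simp
  ultimately show "F ` x \<subseteq> tgt e"
    using eF_in_tgt by blast
qed

text \<open>One extension serves all steps, so that an edge used at several steps has a single image.\<close>
definition push :: "'a resp list \<Rightarrow> 'a resp list" where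
  "push sol = map (\<lambda>i. (edge_image F (fst (sol ! i)), map (image F) (snd (sol ! i)))) [0..<r]"

definition stretch :: "'a set \<Rightarrow> real" where
  "stretch x = (if card (F ` x) = 2 then edge_len (tdist e) (F ` x) else 0)"

lemma stretch_doubleton:
  assumes "i < r" "u \<in> V" "v \<in> V" "u \<noteq> v"
  shows "stretch {u, v} = tdist e (F u) (F v)"
proof -
  have "F u \<in> tgt e" "F v \<in> tgt e"
    using assms eF_in_tgt[of "r - 1"] by auto
  then show ?thesis
    unfolding stretch_def using target_metric edge_len_doubleton[OF target_metric]
    by (cases "F u = F v") (auto simp: fin_metric_def)
qed

lemma stretch_nonneg:
  assumes "i < r" "x \<in> edges V"
  shows "0 \<le> stretch x"
proof (cases "card (F ` x) = 2")
  case True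
  have "F ` x \<in> edges (tgt e)"
    using edge_image_F_subset[of i "{x}"] assms True unfolding edge_image_def by auto
  then show ?thesis
    unfolding stretch_def using True edge_len_nonneg[OF target_metric] by simp
qed (simp add: stretch_def)

lemma pushed_pair:
  assumes "j \<le> i" "i < r" "p \<in> edges (cum Z j)"
  shows "g i ` F ` p = p" "F ` p \<in> edges (cum (reqs J) i)"
proof -
  obtain u v where uv: "p = {u, v}" "u \<in> cum Z i" "v \<in> cum Z i" "u \<noteq> v"
    using assms(3) cum_mono[OF assms(1), of Z] unfolding edges_iff by blast
  then have "f i u \<noteq> f i v"
    using inv_f[OF assms(2)] by metis
  then show "g i ` F ` p = p" "F ` p \<in> edges (cum (reqs J) i)"
    using uv F_extends[OF assms(2)] inv_F[OF assms(2)] cum_reqs_J[OF assms(2)]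
    by (auto simp: edges_iff)
qed

lemma feasible_push:
  assumes "feasible I sol"
  shows "feasible J (push sol)"
proof -
  define s where "s i = (edge_image F (fst (sol ! i)), map (image F) (snd (sol ! i)))" for i
  have push: "push sol = map s [0..<length (reqs J)]"
    unfolding push_def s_def by (simp add: induced_by_simps)
  have "length sol = r"
    using assms unfolding feasible_def by simp
  then have "feasible I (map (nth sol) [0..<r])"
    using assms by (metis map_nth)
  then have I: "fst (sol ! i) \<subseteq> edges V \<and> set (snd (sol ! i)) \<subseteq> edges (cum Z i) \<and>
      feas I i (map (snd \<circ> nth sol) [0..<Suc i]) \<and>
      (\<forall>p\<in>set (snd (sol ! i)). connected_in (fst (sol ! i)) p)" if "i < r" for i
    using that unfolding feasible_map_upt_iff by blast
  show ?thesis
    unfolding push feasible_map_upt_iff unfolding induced_by_simps(4)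
  proof (intro allI impI conjI ballI)
    fix i assume i: "i < r"
    show "fst (s i) \<subseteq> edges (verts J)"
      unfolding s_def using edge_image_F_subset[OF i] I[OF i] by (simp add: induced_by_simps)
    show "set (snd (s i)) \<subseteq> edges (cum (reqs J) i)"
      unfolding s_def using I[OF i] pushed_pair(2)[OF order_refl i] by auto
    have snds: "map (map (image (g i)) \<circ> (snd \<circ> s)) [0..<Suc i] = map (snd \<circ> nth sol) [0..<Suc i]"
    proof (rule map_cong[OF refl])
      fix j assume "j \<in> set [0..<Suc i]"
      then have "j \<le> i" "j < r"
        using i by auto
      show "(map (image (g i)) \<circ> (snd \<circ> s)) j = (snd \<circ> nth sol) j"
        unfolding s_def comp_def snd_conv map_map
        by (rule map_idI) (use I[OF \<open>j < r\<close>] pushed_pair(1)[OF \<open>j \<le> i\<close> i] in blast)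
    qed
    show "feas J i (map (snd \<circ> s) [0..<Suc i])"
      using I[OF i] unfolding induced_by_simps(5) map_map snds by blast
  next
    fix i q assume i: "i < r" and "q \<in> set (snd (s i))"
    then obtain p where "p \<in> set (snd (sol ! i))" "q = F ` p"
      unfolding s_def by auto
    then show "connected_in (fst (s i)) q"
      unfolding s_def using I[OF i] by (simp add: connected_in_edge_image)
  qed
qed

lemma cost_push_le:
  assumes "feasible I sol"
  shows "cost J (push sol) \<le> (\<Sum>x\<in>(\<Union>i<r. fst (sol ! i)). stretch x * rho I {i. i < r \<and> x \<in> fst (sol ! i)})"
proof -
  define R where "R i = fst (sol ! i)" for i
  have R_edges: "R i \<subseteq> edges V" if "i < r" for i
    using assms that unfolding feasible_def R_def by auto
  have image_edges: "edge_image F (R i) \<subseteq> edges (tgt e)" if "i < r" for i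
    using edge_image_F_subset[OF that R_edges[OF that]] .
  have "cost J (push sol)
      = (\<Sum>y\<in>(\<Union>i<r. edge_image F (R i)). edge_len (dist J) y * rho J {i. i < r \<and> y \<in> edge_image F (R i)})"
    unfolding push_def by (rule cost_map_upt) (simp add: R_def)
  also have "\<dots>
      = (\<Sum>y\<in>(\<Union>i<r. edge_image F (R i)). edge_len (tdist e) y * rho I {i. i < r \<and> y \<in> edge_image F (R i)})"
    by (simp add: induced_by_simps rho_induced_by)
  also have "\<dots> \<le> (\<Sum>x\<in>(\<Union>i<r. R i). stretch x * rho I {i. i < r \<and> x \<in> R i})"
  proof (rule edge_image_cost_le[OF subadditive_rho])
    show "finite (\<Union>i<r. R i)"
    proof (rule finite_subset)
      show "(\<Union>i<r. R i) \<subseteq> edges V"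
        using R_edges by blast
      show "finite (edges V)"
        using metric_V by (simp add: fin_metric_def finite_edges)
    qed
    show "edge_len (tdist e) (F ` x) \<le> stretch x" if "card (F ` x) = 2" for x
      using that unfolding stretch_def by simp
    show "0 \<le> stretch x" if x: "x \<in> (\<Union>i<r. R i)" for x
    proof -
      obtain i where "i < r" "x \<in> R i"
        using x by blast
      then show ?thesis
        using R_edges stretch_nonneg by blast
    qed
    show "0 \<le> edge_len (tdist e) y" if "y \<in> (\<Union>i<r. edge_image F (R i))" for y
      using that image_edges edge_len_nonneg[OF target_metric] by blast
  qed
  finally show ?thesis
    unfolding R_def .
qed

end

section \<open>The reduction\<close>

definition compose_alg :: "'a emb_alg pmf \<Rightarrow> 'a nd_alg pmf \<Rightarrow> 'a nd_alg pmf" where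
  "compose_alg Emb Alg = map_pmf (\<lambda>(E, A). pullback E A) (pair_pmf Emb Alg)"

lemma compose_alg_return: "compose_alg (return_pmf E) (return_pmf A) = return_pmf (pullback E A)"
  by (simp add: compose_alg_def)

lemma set_pmf_compose_alg:
  "set_pmf (compose_alg Emb Alg) = (\<lambda>(E, A). pullback E A) ` (set_pmf Emb \<times> set_pmf Alg)"
  by (simp add: compose_alg_def)

lemma nn_integral_compose_alg:
  "(\<integral>\<^sup>+X. \<phi> X \<partial>compose_alg Emb Alg) = (\<integral>\<^sup>+E. \<integral>\<^sup>+A. \<phi> (pullback E A) \<partial>Alg \<partial>Emb)"
  by (simp add: compose_alg_def nn_integral_pair_pmf')

lemma ennreal_mult_le: "ennreal a * ennreal b \<le> ennreal (a * b)"
  by (cases "0 \<le> a \<and> 0 \<le> b") (auto simp: ennreal_mult ennreal_neg)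

locale embedding_reduction =
  fixes P :: "'a nd_inst set"
    and MM :: "('a set \<times> ('a \<Rightarrow> 'a \<Rightarrow> real)) set"
    and Alg :: "'a nd_alg pmf"
    and Emb :: "'a emb_alg pmf"
    and \<alpha> \<beta> :: real
  assumes problem: "nd_problem P"
    and targets_finite: "\<forall>(M, dM)\<in>MM. fin_metric M dM"
    and Alg_competitive: "competitive (over_metrics P MM) Alg \<beta>"
    and Emb_embeds: "embeds_fully_ext P MM \<alpha> Emb"
    and compatible: "compatible P Emb Alg"
begin

lemma wf_inst_of_problem: "I \<in> P \<Longrightarrow> wf_inst I"
  using problem unfolding nd_problem_def by blast

lemma
  assumes "I \<in> P" "E \<in> set_pmf Emb"
  shows target_in_MM: "(tgt (embedding_at E I), tdist (embedding_at E I)) \<in> MM"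
    and embedded_instance_of_support: "embedded_instance I E"
proof -
  have emb: "(tgt (embedding_at E I), tdist (embedding_at E I)) \<in> MM \<and>
      is_online_emb (verts I) (dist I) (reqs I)
        (tgt (embedding_at E I)) (tdist (embedding_at E I)) (emap (embedding_at E I)) \<and>
      fully_ext (verts I) (dist I) (reqs I) (embedding_at E I)"
    using Emb_embeds assms unfolding embeds_fully_ext_def embedding_at_def by blast
  then show "(tgt (embedding_at E I), tdist (embedding_at E I)) \<in> MM"
    by blast
  then have "fin_metric (tgt (embedding_at E I)) (tdist (embedding_at E I))"
    using targets_finite by blast
  then show "embedded_instance I E"
    using emb wf_inst_of_problem[OF assms(1)] by unfold_locales blast+
qed

lemma induced_by_in_over_metrics:
  assumes "I \<in> P" "E \<in> set_pmf Emb"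
  shows "induced_by E I \<in> over_metrics P MM"
proof -
  interpret embedded_instance I E
    using embedded_instance_of_support[OF assms] .
  have "induced_by E I \<in> P"
    using problem assms(1) online_emb target_metric
    unfolding nd_problem_def induced_by_def by blast
  then show ?thesis
    using target_in_MM[OF assms] unfolding over_metrics_def by (simp add: induced_by_simps)
qed

lemma
  assumes "I \<in> P" "feasible I sol" "E \<in> set_pmf Emb"
  shows feasible_run_induced_by: "\<forall>A\<in>set_pmf Alg. feasible (induced_by E I) (run A (induced_by E I))"
    and expected_cost_induced_by_le: "(\<integral>\<^sup>+A. ennreal (cost (induced_by E I) (run A (induced_by E I))) \<partial>Alg)
      \<le> ennreal (\<beta> * OPT (induced_by E I))"
proof -
  interpret embedded_instance I E
    using embedded_instance_of_support[OF assms(1,3)] .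
  have "\<exists>sol. feasible (induced_by E I) sol"
    using feasible_push[OF assms(2)] by blast
  then show "\<forall>A\<in>set_pmf Alg. feasible (induced_by E I) (run A (induced_by E I))"
    and "(\<integral>\<^sup>+A. ennreal (cost (induced_by E I) (run A (induced_by E I))) \<partial>Alg)
      \<le> ennreal (\<beta> * OPT (induced_by E I))"
    using Alg_competitive induced_by_in_over_metrics[OF assms(1,3)] unfolding competitive_def by blast+
qed

lemma
  assumes "I \<in> P" "feasible I sol" "E \<in> set_pmf Emb" "A \<in> set_pmf Alg"
  shows feasible_run_pullback: "feasible I (run (pullback E A) I)"
    and cost_run_pullback_le: "cost I (run (pullback E A) I) \<le> cost (induced_by E I) (run A (induced_by E I))"
proof -
  interpret embedded_instance I E
    using embedded_instance_of_support[OF assms(1,3)] .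
  have feasible_J: "feasible J (run A J)"
    using feasible_run_induced_by[OF assms(1-3)] assms(4) by blast
  have compatible_J: "\<Union> (fst (A J i)) \<subseteq> esub e i" if "i < r" for i
    using compatible assms(1,3,4) that
    unfolding compatible_def Let_def induced_by_def embedding_at_def by blast
  show "feasible I (run (pullback E A) I)"
    using feasible_pullback[OF feasible_J compatible_J] .
  show "cost I (run (pullback E A) I) \<le> cost J (run A J)"
    using cost_pullback_le[OF feasible_J compatible_J] .
qed

lemma OPT_induced_by_le:
  assumes "I \<in> P" "feasible I sol" "E \<in> set_pmf Emb"
  shows "ennreal (OPT (induced_by E I)) \<le> (\<Sum>x\<in>(\<Union>i<length (reqs I). fst (sol ! i)).
    ennreal (rho I {i. i < length (reqs I) \<and> x \<in> fst (sol ! i)}) * ennreal (embedded_instance.stretch I E x))"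
proof -
  interpret embedded_instance I E
    using embedded_instance_of_support[OF assms(1,3)] .
  define U where "U = (\<Union>i<r. fst (sol ! i))"
  define S where "S x = rho I {i. i < r \<and> x \<in> fst (sol ! i)}" for x
  have S_nonneg: "0 \<le> S x" and stretch_nonneg: "0 \<le> stretch x" if "x \<in> U" for x
    using used_edge_load_nonneg[OF wf_inst_of_problem[OF assms(1)] assms(2)]
      used_edge_in_edges[OF wf_inst_of_problem[OF assms(1)] assms(2)]
      used_edge_last_step[OF wf_inst_of_problem[OF assms(1)] assms(2)] stretch_nonneg that
    unfolding U_def S_def by blast+
  have "wf_inst J"
    using induced_by_in_over_metrics[OF assms(1,3)] wf_inst_of_problem unfolding over_metrics_def by blast
  then have "OPT J \<le> cost J (push sol)"
    using OPT_le_cost feasible_push[OF assms(2)] by blast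
  also have "\<dots> \<le> (\<Sum>x\<in>U. S x * stretch x)"
    using cost_push_le[OF assms(2)] unfolding U_def S_def by (simp add: mult.commute)
  finally have "ennreal (OPT J) \<le> ennreal (\<Sum>x\<in>U. S x * stretch x)"
    by (rule ennreal_leI)
  also have "\<dots> = (\<Sum>x\<in>U. ennreal (S x * stretch x))"
    using S_nonneg stretch_nonneg by (simp add: sum_ennreal)
  also have "\<dots> = (\<Sum>x\<in>U. ennreal (S x) * ennreal (stretch x))"
    using S_nonneg by (simp add: ennreal_mult')
  finally show ?thesis
    unfolding U_def S_def .
qed

lemma expected_stretch_le:
  assumes "I \<in> P" "i < length (reqs I)" "x \<in> edges (verts I)"
  shows "(\<integral>\<^sup>+E. ennreal (embedded_instance.stretch I E x) \<partial>Emb)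
    \<le> ennreal \<alpha> * ennreal (edge_len (dist I) x)"
proof -
  obtain u v where uv: "x = {u, v}" "u \<in> verts I" "v \<in> verts I" "u \<noteq> v"
    using assms(3) unfolding edges_iff by blast
  define Fr where "Fr E = eF (E (verts I, dist I, reqs I)) (length (reqs I) - 1)" for E :: "'a emb_alg"
  have "(\<integral>\<^sup>+E. ennreal (embedded_instance.stretch I E x) \<partial>Emb)
      = (\<integral>\<^sup>+E. ennreal (tdist (E (verts I, dist I, reqs I)) (Fr E u) (Fr E v)) \<partial>Emb)"
  proof (rule nn_integral_cong_AE)
    show "AE E in Emb. ennreal (embedded_instance.stretch I E x)
        = ennreal (tdist (E (verts I, dist I, reqs I)) (Fr E u) (Fr E v))"
      using embedded_instance.stretch_doubleton[OF embedded_instance_of_support[OF assms(1)] assms(2) uv(2-4)]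
      unfolding AE_measure_pmf_iff uv(1) Fr_def embedding_at_def by simp
  qed
  also have "\<dots> \<le> ennreal (\<alpha> * dist I u v)"
  proof -
    have "length (reqs I) - 1 < length (reqs I)"
      using assms(2) by simp
    then show ?thesis
      using Emb_embeds assms(1) uv(2,3) unfolding embeds_fully_ext_def Fr_def by blast
  qed
  also have "\<dots> = ennreal \<alpha> * ennreal (edge_len (dist I) x)"
  proof -
    have "fin_metric (verts I) (dist I)"
      using wf_inst_of_problem[OF assms(1)] unfolding wf_inst_def by blast
    then have "edge_len (dist I) x = dist I u v" "0 \<le> dist I u v"
      using edge_len_doubleton[of "verts I" "dist I" u v] uv unfolding fin_metric_def by auto
    then show ?thesis
      by (simp add: ennreal_mult'')
  qed
  finally show ?thesis .
qed

lemma OPT_induced_by_nonneg: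
  assumes "I \<in> P" "feasible I sol" "E \<in> set_pmf Emb"
  shows "0 \<le> OPT (induced_by E I)"
proof -
  interpret embedded_instance I E
    using embedded_instance_of_support[OF assms(1,3)] .
  have "wf_inst J"
    using induced_by_in_over_metrics[OF assms(1,3)] wf_inst_of_problem unfolding over_metrics_def by blast
  then show ?thesis
    using OPT_nonneg feasible_push[OF assms(2)] by blast
qed

lemma expected_OPT_induced_by_le:
  assumes "I \<in> P" "feasible I sol"
  shows "(\<integral>\<^sup>+E. ennreal (OPT (induced_by E I)) \<partial>Emb) \<le> ennreal \<alpha> * ennreal (OPT I)"
proof -
  obtain sol' where sol': "feasible I sol'" "cost I sol' = OPT I"
    using ex_optimal_solution[OF wf_inst_of_problem[OF assms(1)] assms(2)] by blast
  define r where "r = length (reqs I)"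
  define U where "U = (\<Union>i<r. fst (sol' ! i))"
  define S where "S x = rho I {i. i < r \<and> x \<in> fst (sol' ! i)}" for x
  define len where "len x = edge_len (dist I) x" for x
  have used: "x \<in> edges (verts I)" "r - 1 < r" "0 \<le> len x" "0 \<le> S x" if "x \<in> U" for x
    using used_edge_in_edges[OF wf_inst_of_problem[OF assms(1)] sol'(1)]
      used_edge_last_step[OF wf_inst_of_problem[OF assms(1)] sol'(1)]
      used_edge_len_nonneg[OF wf_inst_of_problem[OF assms(1)] sol'(1)]
      used_edge_load_nonneg[OF wf_inst_of_problem[OF assms(1)] sol'(1)] that
    unfolding U_def S_def len_def r_def by blast+
  have "(\<integral>\<^sup>+E. ennreal (OPT (induced_by E I)) \<partial>Emb)
      \<le> (\<integral>\<^sup>+E. (\<Sum>x\<in>U. ennreal (S x) * ennreal (embedded_instance.stretch I E x)) \<partial>Emb)"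
    using OPT_induced_by_le[OF assms(1) sol'(1)] unfolding U_def S_def r_def
    by (intro nn_integral_mono_AE) (simp add: AE_measure_pmf_iff)
  also have "\<dots> = (\<Sum>x\<in>U. ennreal (S x) * (\<integral>\<^sup>+E. ennreal (embedded_instance.stretch I E x) \<partial>Emb))"
    by (simp add: nn_integral_sum nn_integral_cmult)
  also have "\<dots> \<le> (\<Sum>x\<in>U. ennreal (S x) * (ennreal \<alpha> * ennreal (len x)))"
    using expected_stretch_le[OF assms(1)] used(1,2) unfolding len_def r_def
    by (intro sum_mono mult_left_mono) auto
  also have "\<dots> = ennreal \<alpha> * (\<Sum>x\<in>U. ennreal (S x * len x))"
    unfolding sum_distrib_left using used(4)
    by (intro sum.cong refl) (simp add: ennreal_mult' mult_ac)
  also have "\<dots> = ennreal \<alpha> * ennreal (\<Sum>x\<in>U. S x * len x)"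
    using used(3,4) by (subst sum_ennreal) auto
  also have "(\<Sum>x\<in>U. S x * len x) = OPT I"
    using sol' unfolding feasible_def cost_def U_def S_def len_def r_def
    by (simp add: mult.commute)
  finally show ?thesis .
qed

lemma expected_cost_compose_alg_le:
  assumes "I \<in> P" "feasible I sol"
  shows "(\<integral>\<^sup>+X. ennreal (cost I (run X I)) \<partial>compose_alg Emb Alg) \<le> ennreal (\<alpha> * \<beta> * OPT I)"
proof -
  have "(\<integral>\<^sup>+X. ennreal (cost I (run X I)) \<partial>compose_alg Emb Alg)
      = (\<integral>\<^sup>+E. \<integral>\<^sup>+A. ennreal (cost I (run (pullback E A) I)) \<partial>Alg \<partial>Emb)"
    by (rule nn_integral_compose_alg)
  also have "\<dots> \<le> (\<integral>\<^sup>+E. \<integral>\<^sup>+A. ennreal (cost (induced_by E I) (run A (induced_by E I))) \<partial>Alg \<partial>Emb)"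
    using cost_run_pullback_le[OF assms]
    by (intro nn_integral_mono_AE) (auto simp: AE_measure_pmf_iff intro!: nn_integral_mono_AE ennreal_leI)
  also have "\<dots> \<le> (\<integral>\<^sup>+E. ennreal \<beta> * ennreal (OPT (induced_by E I)) \<partial>Emb)"
    using expected_cost_induced_by_le[OF assms] OPT_induced_by_nonneg[OF assms]
    by (intro nn_integral_mono_AE) (auto simp: AE_measure_pmf_iff ennreal_mult'')
  also have "\<dots> = ennreal \<beta> * (\<integral>\<^sup>+E. ennreal (OPT (induced_by E I)) \<partial>Emb)"
    by (rule nn_integral_cmult) simp
  also have "\<dots> \<le> ennreal \<beta> * (ennreal \<alpha> * ennreal (OPT I))"
    by (intro mult_left_mono expected_OPT_induced_by_le[OF assms]) simp
  also have "\<dots> \<le> ennreal \<beta> * ennreal (\<alpha> * OPT I)"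
    by (intro mult_left_mono ennreal_mult_le) simp
  also have "\<dots> \<le> ennreal (\<beta> * (\<alpha> * OPT I))"
    by (rule ennreal_mult_le)
  finally show ?thesis
    by (simp add: mult_ac)
qed

lemma competitive_compose_alg: "competitive P (compose_alg Emb Alg) (\<alpha> * \<beta>)"
  unfolding competitive_def
proof (intro conjI ballI impI)
  fix X assume "X \<in> set_pmf (compose_alg Emb Alg)"
  then obtain E A where "E \<in> set_pmf Emb" "A \<in> set_pmf Alg" "X = pullback E A"
    unfolding set_pmf_compose_alg by auto
  then show "online_alg X"
    using Emb_embeds Alg_competitive online_alg_pullback
    unfolding embeds_fully_ext_def competitive_def by blast
next
  fix I assume I: "I \<in> P" and "\<exists>sol. feasible I sol"
  then obtain sol where sol: "feasible I sol"
    by blast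
  show "feasible I (run X I)" if "X \<in> set_pmf (compose_alg Emb Alg)" for X
    using that feasible_run_pullback[OF I sol] unfolding set_pmf_compose_alg by auto
  show "(\<integral>\<^sup>+X. ennreal (cost I (run X I)) \<partial>compose_alg Emb Alg) \<le> ennreal (\<alpha> * \<beta> * OPT I)"
    by (rule expected_cost_compose_alg_le[OF I sol])
qed

end

theorem theorem3p5:
  fixes P :: "'a nd_inst set"
    and MM :: "('a set \<times> ('a \<Rightarrow> 'a \<Rightarrow> real)) set"
    and Alg :: "'a nd_alg pmf"
    and Emb :: "'a emb_alg pmf"
    and \<alpha> \<beta> :: real
  assumes "nd_problem P"
    and "\<forall>(M, dM)\<in>MM. fin_metric M dM"
    and "competitive (over_metrics P MM) Alg \<beta>"
    and "embeds_fully_ext P MM \<alpha> Emb"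
    and "compatible P Emb Alg"
  shows "\<exists>Alg'. competitive P Alg' (\<alpha> * \<beta>) \<and>
           ((\<exists>E. Emb = return_pmf E) \<and> (\<exists>A. Alg = return_pmf A) \<longrightarrow> (\<exists>A'. Alg' = return_pmf A'))"
proof -
  interpret embedding_reduction P MM Alg Emb \<alpha> \<beta>
    using assms by unfold_locales
  show ?thesis
    using competitive_compose_alg compose_alg_return by blast
qed

end
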